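(* Let $A$ be an algebra of Jordan type half over a field $\mathbb{F}$ of characteristic zero. If $a,b\in A$ are primitive axes of Jordan type half with $(a,b)=0$ or $(a,b)=1$, then $J=\langle\langle a,b\rangle\rangle$ is solid.
   Context: All algebras are commutative but not necessarily associative. For an element $x$ of an algebra $A$ and $\lambda\in\mathbb{F}$ write $A_\lambda(x)=\{u\in A: xu=\lambda u\}$. A primitive axis of Jordan type half in $A$ is an element $x\neq 0$ with $x^2=x$, $A=A_1(x)\oplus A_0(x)\oplus A_{1/2}(x)$, $A_1(x)=\mathbb{F}x$, and the fusion rules $A_1A_1\subseteq A_1$, $A_1A_0=0$, $A_0A_0\subseteq A_0$, $A_1A_{1/2}\subseteq A_{1/2}$, $A_0A_{1/2}\subseteq A_{1/2}$, $A_{1/2}A_{1/2}\subseteq A_1\oplus A_0$ (eigenspaces of $x$). An algebra of Jordan type half is a commutative algebra generated by primitive axes of Jordan type half. Such an algebra has a unique Frobenius form $(\cdot,\cdot)$: a bilinear form with $(uv,w)=(u,vw)$ and $(x,x)=1$ for every primitive axis $x$. $\langle\langle a,b\rangle\rangle$ denotes the subalgebra generated by $a,b$. Such a subalgebra $J$ is solid if every idempotent $c\in J$ with $c\neq0$ and $c\neq 1_J$ (the identity of $J$, if $J$ has one) is a primitive axis of Jordan type half in $A$. *)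

theory Defs
  imports Complex_Main
begin

definition comm_algebra :: "('a::field \<Rightarrow> 'v::ab_group_add \<Rightarrow> 'v) \<Rightarrow> ('v \<Rightarrow> 'v \<Rightarrow> 'v) \<Rightarrow> bool" where
  "comm_algebra sc m \<longleftrightarrow> vector_space sc \<and> (\<forall>u v. m u v = m v u)
     \<and> (\<forall>u v w. m (u + v) w = m u w + m v w)
     \<and> (\<forall>c u w. m (sc c u) w = sc c (m u w))"

definition eigsp :: "('a::field \<Rightarrow> 'v::ab_group_add \<Rightarrow> 'v) \<Rightarrow> ('v \<Rightarrow> 'v \<Rightarrow> 'v) \<Rightarrow> 'v \<Rightarrow> 'a \<Rightarrow> 'v set" where
  "eigsp sc m x l = {u. m x u = sc l u}"

definition prim_axis_half :: "('a::field \<Rightarrow> 'v::ab_group_add \<Rightarrow> 'v) \<Rightarrow> ('v \<Rightarrow> 'v \<Rightarrow> 'v) \<Rightarrow> 'v \<Rightarrow> bool" where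
  "prim_axis_half sc m x \<longleftrightarrow>
     (let A1 = eigsp sc m x 1; A0 = eigsp sc m x 0; Ah = eigsp sc m x (1/2) in
       x \<noteq> 0 \<and> m x x = x
     \<and> (\<forall>u. \<exists>u1 u0 uh. u1 \<in> A1 \<and> u0 \<in> A0 \<and> uh \<in> Ah \<and> u = u1 + u0 + uh)
     \<and> A1 = {sc c x | c. True}
     \<and> (\<forall>u\<in>A1. \<forall>v\<in>A1. m u v \<in> A1)
     \<and> (\<forall>u\<in>A1. \<forall>v\<in>A0. m u v = 0)
     \<and> (\<forall>u\<in>A0. \<forall>v\<in>A0. m u v \<in> A0)
     \<and> (\<forall>u\<in>A1. \<forall>v\<in>Ah. m u v \<in> Ah)
     \<and> (\<forall>u\<in>A0. \<forall>v\<in>Ah. m u v \<in> Ah)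
     \<and> (\<forall>u\<in>Ah. \<forall>v\<in>Ah. \<exists>w1 w0. w1 \<in> A1 \<and> w0 \<in> A0 \<and> m u v = w1 + w0))"

definition gen_subalg :: "('a::field \<Rightarrow> 'v::ab_group_add \<Rightarrow> 'v) \<Rightarrow> ('v \<Rightarrow> 'v \<Rightarrow> 'v) \<Rightarrow> 'v set \<Rightarrow> 'v set" where
  "gen_subalg sc m S = \<Inter> {B. module.subspace sc B \<and> (\<forall>u\<in>B. \<forall>v\<in>B. m u v \<in> B) \<and> S \<subseteq> B}"

definition jordan_type_half :: "('a::field \<Rightarrow> 'v::ab_group_add \<Rightarrow> 'v) \<Rightarrow> ('v \<Rightarrow> 'v \<Rightarrow> 'v) \<Rightarrow> bool" where
  "jordan_type_half sc m \<longleftrightarrow> comm_algebra sc m \<and> gen_subalg sc m {x. prim_axis_half sc m x} = UNIV"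

definition frobenius_form :: "('a::field \<Rightarrow> 'v::ab_group_add \<Rightarrow> 'v) \<Rightarrow> ('v \<Rightarrow> 'v \<Rightarrow> 'v) \<Rightarrow> ('v \<Rightarrow> 'v \<Rightarrow> 'a) \<Rightarrow> bool" where
  "frobenius_form sc m f \<longleftrightarrow>
     (\<forall>u v w. f (u + v) w = f u w + f v w) \<and> (\<forall>c u w. f (sc c u) w = c * f u w)
   \<and> (\<forall>u v w. f u (v + w) = f u v + f u w) \<and> (\<forall>c u w. f u (sc c w) = c * f u w)
   \<and> (\<forall>u v w. f (m u v) w = f u (m v w))
   \<and> (\<forall>x. prim_axis_half sc m x \<longrightarrow> f x x = 1)"

definition solid :: "('a::field \<Rightarrow> 'v::ab_group_add \<Rightarrow> 'v) \<Rightarrow> ('v \<Rightarrow> 'v \<Rightarrow> 'v) \<Rightarrow> 'v set \<Rightarrow> bool" where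
  "solid sc m J \<longleftrightarrow> (\<forall>c\<in>J. m c c = c \<and> c \<noteq> 0 \<and> \<not> (\<forall>u\<in>J. m c u = u) \<longrightarrow> prim_axis_half sc m c)"

end

theory Submission
  imports Defs "HOL-Computational_Algebra.Polynomial"
begin

text \<open>
  For a primitive axis \<open>x\<close> the Frobenius form gives \<open>x(xy) = xy/2 + (x,y)/2 x\<close>, and
  idempotency of the Miyamoto image \<open>\<tau>\<^sub>a(b)\<close> gives \<open>(ab)(ab) = \<phi>/4 (a + b) + \<phi>/2 ab\<close>
  with \<open>\<phi> = (a,b)\<close>. So \<open>J\<close> is spanned by \<open>a, b, ab\<close> with a multiplication table depending
  only on \<open>\<phi>\<close>. Peirce coordinates relative to \<open>a\<close> show that for \<open>\<phi> \<in> {0, 1}\<close> every idempotent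
  of \<open>J\<close> other than \<open>0\<close> and \<open>1\<^sub>J\<close> lies on a polynomial curve \<open>c(t)\<close> of idempotents with
  \<open>c(0) = a\<close> and \<open>c(t + 4) = \<tau>\<^sub>a(\<tau>\<^sub>b(c(t)))\<close> (up to exchanging \<open>a\<close> and \<open>b\<close>), where
  \<open>\<tau>\<^sub>x\<close> is the Miyamoto involution of the axis \<open>x\<close>. Hence
  every \<open>c(4k)\<close> is an axis. For a nonzero idempotent, being an axis amounts to polynomial
  identities in the curve parameter; holding at infinitely many points (characteristic 0), they
  hold everywhere.
\<close>

definition poly_comb :: "('a::field \<Rightarrow> 'v::ab_group_add \<Rightarrow> 'v) \<Rightarrow> (nat \<times> 'v) list \<Rightarrow> 'a \<Rightarrow> 'v" where
  "poly_comb sc L t = (\<Sum>(i, v)\<leftarrow>L. sc (t ^ i) v)"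

lemma poly_comb_Nil [simp]: "poly_comb sc [] t = 0"
  by (simp add: poly_comb_def)

lemma poly_comb_Cons [simp]: "poly_comb sc ((i, v) # L) t = sc (t ^ i) v + poly_comb sc L t"
  by (simp add: poly_comb_def)

lemma poly_comb_append [simp]: "poly_comb sc (L1 @ L2) t = poly_comb sc L1 t + poly_comb sc L2 t"
  by (simp add: poly_comb_def)

definition polynomial_map :: "('a::field \<Rightarrow> 'v::ab_group_add \<Rightarrow> 'v) \<Rightarrow> ('a \<Rightarrow> 'v) \<Rightarrow> bool" where
  "polynomial_map sc E \<longleftrightarrow> (\<exists>L. \<forall>t. E t = poly_comb sc L t)"

lemma vector_space_field_mult: "vector_space ((*) :: 'a::field \<Rightarrow> 'a \<Rightarrow> 'a)"
  by unfold_locales (auto simp: algebra_simps)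

context vector_space
begin

lemma linear_poly_comb:
  assumes "Vector_Spaces.linear scale (*) g"
  shows "g (poly_comb scale L t) = poly (\<Sum>(i, v)\<leftarrow>L. monom (g v) i) t"
proof -
  interpret vector_space_pair scale "(*)"
    using vector_space_field_mult by (simp add: vector_space_pair_def vector_space_axioms)
  show ?thesis
    by (induction L) (auto simp: linear_0[OF assms] linear_add[OF assms] linear_scale[OF assms] poly_monom)
qed

lemma poly_comb_eq_0:
  assumes "infinite {t. poly_comb scale L t = 0}"
  shows "poly_comb scale L s = 0"
proof (rule ccontr)
  assume ne: "poly_comb scale L s \<noteq> 0"
  interpret vector_space_pair scale "(*)"
    using vector_space_field_mult by (simp add: vector_space_pair_def vector_space_axioms)
  have "independent {poly_comb scale L s}"
    using ne by (intro independent_insertI) (auto simp: span_empty independent_empty)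
  then obtain g where g: "Vector_Spaces.linear scale (*) g" "g (poly_comb scale L s) = 1"
    using linear_independent_extend[of _ "\<lambda>_. 1"] by blast
  define q where "q = (\<Sum>(i, v)\<leftarrow>L. monom (g v) i)"
  have "{t. poly_comb scale L t = 0} \<subseteq> {t. poly q t = 0}"
    using linear_poly_comb[OF g(1)] linear_0[OF g(1)] unfolding q_def by (metis (mono_tags) mem_Collect_eq subsetI)
  then have "q = 0"
    using assms poly_roots_finite finite_subset by blast
  then show False
    using linear_poly_comb[OF g(1), of L s] g(2) by (simp add: q_def)
qed

lemma polynomial_map_eq_0:
  assumes "polynomial_map scale E" and "infinite {t. E t = 0}"
  shows "E s = 0"
proof -
  obtain L where "\<And>t. E t = poly_comb scale L t"
    using assms(1) unfolding polynomial_map_def by blast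
  then show ?thesis
    using poly_comb_eq_0[of L s] assms(2) by simp
qed

lemma polynomial_map_const [intro]: "polynomial_map scale (\<lambda>t. v)"
  unfolding polynomial_map_def by (rule exI[of _ "[(0, v)]"]) simp

lemma polynomial_map_add [intro]:
  "polynomial_map scale E \<Longrightarrow> polynomial_map scale F \<Longrightarrow> polynomial_map scale (\<lambda>t. E t + F t)"
  unfolding polynomial_map_def by (metis poly_comb_append)

lemma scale_poly_comb: "c *s poly_comb scale L t = poly_comb scale (map (\<lambda>(i, v). (i, c *s v)) L) t"
  by (induction L) (auto simp: scale_right_distrib)

lemma polynomial_map_scale [intro]: "polynomial_map scale E \<Longrightarrow> polynomial_map scale (\<lambda>t. c *s E t)"
  unfolding polynomial_map_def by (metis scale_poly_comb)

lemma polynomial_map_diff [intro]: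
  assumes "polynomial_map scale E" and "polynomial_map scale F"
  shows "polynomial_map scale (\<lambda>t. E t - F t)"
proof -
  have "polynomial_map scale (\<lambda>t. E t + (-1) *s F t)"
    using assms by (intro polynomial_map_add polynomial_map_scale)
  then show ?thesis by simp
qed

lemma polynomial_map_scale_param [intro]: "polynomial_map scale E \<Longrightarrow> polynomial_map scale (\<lambda>t. t *s E t)"
proof -
  assume "polynomial_map scale E"
  then obtain L where L: "\<And>t. E t = poly_comb scale L t"
    unfolding polynomial_map_def by blast
  have "t *s E t = poly_comb scale (map (\<lambda>(i, v). (Suc i, v)) L) t" for t
    unfolding L by (induction L) (auto simp: scale_right_distrib)
  then show ?thesis
    unfolding polynomial_map_def by blast
qed

lemma polynomial_map_bilinear:
  assumes add_left: "\<And>u v w. B (u + v) w = B u w + B v w"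
    and scale_left: "\<And>c u w. B (c *s u) w = c *s B u w"
    and add_right: "\<And>u v w. B u (v + w) = B u v + B u w"
    and scale_right: "\<And>c u w. B u (c *s w) = c *s B u w"
    and "polynomial_map scale E" and "polynomial_map scale F"
  shows "polynomial_map scale (\<lambda>t. B (E t) (F t))"
proof -
  obtain L1 L2 where L: "\<And>t. E t = poly_comb scale L1 t" "\<And>t. F t = poly_comb scale L2 t"
    using assms(5,6) unfolding polynomial_map_def by metis
  have zero_left: "B 0 w = 0" for w
    using add_left[of 0 0 w] by simp
  have zero_right: "B u 0 = 0" for u
    using add_right[of u 0 0] by simp
  have single: "t ^ i *s B v (poly_comb scale L t) = poly_comb scale (map (\<lambda>(j, w). (i + j, B v w)) L) t"
    for i v L and t :: 'a
    by (induction L) (auto simp: add_right scale_right zero_right power_add scale_right_distrib mult.commute)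
  have "B (poly_comb scale L1 t) (poly_comb scale L2 t)
      = poly_comb scale (concat (map (\<lambda>(i, v). map (\<lambda>(j, w). (i + j, B v w)) L2) L1)) t" for t
    by (induction L1) (auto simp: add_left scale_left zero_left single)
  then show ?thesis
    unfolding polynomial_map_def L by blast
qed

end

lemma field_idem_cases:
  fixes x :: "'a::field"
  assumes "x * x = x"
  shows "x = 0 \<or> x = 1"
  using assms by (metis mult_cancel_left2 mult_zero_right)

locale comm_alg = vector_space scale
  for scale :: "'a::field_char_0 \<Rightarrow> 'v::ab_group_add \<Rightarrow> 'v" (infixr \<open>*s\<close> 75) +
  fixes m :: "'v \<Rightarrow> 'v \<Rightarrow> 'v" (infixl \<open>\<cdot>\<close> 70)
  assumes mult_commute: "u \<cdot> v = v \<cdot> u"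
    and mult_add_left: "(u + v) \<cdot> w = u \<cdot> w + v \<cdot> w"
    and mult_scale_left: "(c *s u) \<cdot> w = c *s (u \<cdot> w)"

lemma comm_algebra_imp_comm_alg:
  fixes sc :: "'a::field_char_0 \<Rightarrow> 'v::ab_group_add \<Rightarrow> 'v"
  assumes "comm_algebra sc m"
  shows "comm_alg sc m"
  using assms unfolding comm_algebra_def comm_alg_def comm_alg_axioms_def by blast

context comm_alg
begin

abbreviation axis :: "'v \<Rightarrow> bool" where
  "axis x \<equiv> prim_axis_half scale m x"

abbreviation half :: "'v \<Rightarrow> 'v" where
  "half u \<equiv> (1/2 :: 'a) *s u"

lemma mult_add_right: "w \<cdot> (u + v) = w \<cdot> u + w \<cdot> v"
  by (simp only: mult_commute[of w] mult_add_left)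

lemma mult_scale_right: "w \<cdot> (c *s u) = c *s (w \<cdot> u)"
  by (simp only: mult_commute[of w] mult_scale_left)

lemma mult_zero_left [simp]: "0 \<cdot> u = 0"
  using mult_scale_left[of 0 0 u] by simp

lemma mult_zero_right [simp]: "u \<cdot> 0 = 0"
  using mult_scale_right[of u 0 0] by simp

lemma mult_minus_left: "(- u) \<cdot> w = - (u \<cdot> w)"
  using mult_scale_left[of "-1" u w] by simp

lemma mult_minus_right: "w \<cdot> (- u) = - (w \<cdot> u)"
  using mult_scale_right[of w "-1" u] by simp

lemma mult_diff_left: "(u - v) \<cdot> w = u \<cdot> w - v \<cdot> w"
  by (simp only: diff_conv_add_uminus mult_add_left mult_minus_left)

lemma mult_diff_right: "w \<cdot> (u - v) = w \<cdot> u - w \<cdot> v"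
  by (simp only: diff_conv_add_uminus mult_add_right mult_minus_right)

lemmas mult_linear = mult_add_left mult_add_right mult_scale_left mult_scale_right
  mult_minus_left mult_minus_right mult_diff_left mult_diff_right

lemma polynomial_map_mult [intro]:
  "polynomial_map scale E \<Longrightarrow> polynomial_map scale F \<Longrightarrow> polynomial_map scale (\<lambda>t. E t \<cdot> F t)"
  by (rule polynomial_map_bilinear) (simp_all add: mult_linear)

text \<open>Explicit linear combinations: simp normalises sums and multiples of them, which is how
  all multiplication-table computations below are carried out.\<close>

definition comb3 :: "'v \<Rightarrow> 'v \<Rightarrow> 'v \<Rightarrow> 'a \<Rightarrow> 'a \<Rightarrow> 'a \<Rightarrow> 'v" where
  "comb3 u v w x y z = x *s u + y *s v + z *s w"

lemma comb3_add [simp]: "comb3 u v w x y z + comb3 u v w x' y' z' = comb3 u v w (x + x') (y + y') (z + z')"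
  by (simp add: comb3_def scale_left_distrib add_ac)

lemma comb3_minus [simp]: "- comb3 u v w x y z = comb3 u v w (- x) (- y) (- z)"
  by (simp add: comb3_def add_ac)

lemma comb3_diff [simp]: "comb3 u v w x y z - comb3 u v w x' y' z' = comb3 u v w (x - x') (y - y') (z - z')"
  by (simp only: diff_conv_add_uminus comb3_minus comb3_add)

lemma comb3_scale [simp]: "c *s comb3 u v w x y z = comb3 u v w (c * x) (c * y) (c * z)"
  by (simp add: comb3_def scale_right_distrib)

lemma comb3_unit [simp]: "comb3 u v w 1 0 0 = u" "comb3 u v w 0 1 0 = v" "comb3 u v w 0 0 1 = w"
  by (simp_all add: comb3_def)

lemma comb3_eqI: "x = x' \<Longrightarrow> y = y' \<Longrightarrow> z = z' \<Longrightarrow> comb3 u v w x y z = comb3 u v w x' y' z'"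
  by simp

lemma comb3_mult_left: "comb3 u v w x y z \<cdot> r = comb3 (u \<cdot> r) (v \<cdot> r) (w \<cdot> r) x y z"
  by (simp add: comb3_def mult_linear)

lemma comb3_mult_right: "r \<cdot> comb3 u v w x y z = comb3 (r \<cdot> u) (r \<cdot> v) (r \<cdot> w) x y z"
  by (simp add: comb3_def mult_linear)

lemma comb3_comb3:
  "comb3 (comb3 u v w p1 p2 p3) (comb3 u v w q1 q2 q3) (comb3 u v w r1 r2 r3) x y z
   = comb3 u v w (x*p1 + y*q1 + z*r1) (x*p2 + y*q2 + z*r2) (x*p3 + y*q3 + z*r3)"
  by (simp only: comb3_def[of "comb3 u v w p1 p2 p3"] comb3_scale comb3_add)

lemma comb3_eigen:
  assumes "x \<cdot> u1 = u1" "x \<cdot> u0 = 0" "x \<cdot> uh = half uh"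
  shows "x \<cdot> comb3 u1 u0 uh p q r = comb3 u1 u0 uh p 0 (r / 2)"
  using assms by (simp add: comb3_def mult_linear)

definition comb4 :: "'v \<Rightarrow> 'v \<Rightarrow> 'v \<Rightarrow> 'v \<Rightarrow> 'a \<Rightarrow> 'a \<Rightarrow> 'a \<Rightarrow> 'a \<Rightarrow> 'v" where
  "comb4 u v w r x y z d = x *s u + y *s v + z *s w + d *s r"

lemma comb4_add [simp]:
  "comb4 u v w r x y z d + comb4 u v w r x' y' z' d' = comb4 u v w r (x + x') (y + y') (z + z') (d + d')"
  by (simp add: comb4_def scale_left_distrib add_ac)

lemma comb4_scale [simp]: "c *s comb4 u v w r x y z d = comb4 u v w r (c * x) (c * y) (c * z) (c * d)"
  by (simp add: comb4_def scale_right_distrib)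

lemma comb4_eqI:
  "x = x' \<Longrightarrow> y = y' \<Longrightarrow> z = z' \<Longrightarrow> d = d' \<Longrightarrow> comb4 u v w r x y z d = comb4 u v w r x' y' z' d'"
  by simp

lemma comb3_comb4:
  "comb3 (comb4 u v w r p1 p2 p3 p4) (comb4 u v w r q1 q2 q3 q4) (comb4 u v w r r1 r2 r3 r4) x y z
   = comb4 u v w r (x*p1 + y*q1 + z*r1) (x*p2 + y*q2 + z*r2) (x*p3 + y*q3 + z*r3) (x*p4 + y*q4 + z*r4)"
  by (simp only: comb3_def[of "comb4 u v w r p1 p2 p3 p4"] comb4_scale comb4_add)

lemma comb4_solve:
  assumes eq: "comb4 u v w r x y z d = comb4 u v w r x' y' z' d'" and "d \<noteq> d'"
  shows "r = comb3 u v w ((x' - x) / (d - d')) ((y' - y) / (d - d')) ((z' - z) / (d - d'))"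
proof -
  have "comb3 u v w (x - x') (y - y') (z - z') + (d - d') *s r = 0"
    using eq unfolding comb3_def comb4_def
    by (simp add: scale_left_diff_distrib algebra_simps)
  then have "(d - d') *s r = comb3 u v w (x' - x) (y' - y) (z' - z)"
    by (simp add: add_eq_0_iff)
  then have "(1 / (d - d')) *s ((d - d') *s r) = comb3 u v w ((x' - x) / (d - d')) ((y' - y) / (d - d')) ((z' - z) / (d - d'))"
    by simp
  then show ?thesis
    using \<open>d \<noteq> d'\<close> by simp
qed

text \<open>The Peirce projections are the Lagrange polynomials of the eigenvalues 1, 0, 1/2,
  evaluated at multiplication by x.\<close>

definition proj1 :: "'v \<Rightarrow> 'v \<Rightarrow> 'v" where
  "proj1 x u = 2 *s (x \<cdot> (x \<cdot> u)) - x \<cdot> u"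

definition proj0 :: "'v \<Rightarrow> 'v \<Rightarrow> 'v" where
  "proj0 x u = 2 *s (x \<cdot> (x \<cdot> u)) - 3 *s (x \<cdot> u) + u"

definition projh :: "'v \<Rightarrow> 'v \<Rightarrow> 'v" where
  "projh x u = 4 *s (x \<cdot> u) - 4 *s (x \<cdot> (x \<cdot> u))"

lemma proj_sum: "proj1 x u + proj0 x u + projh x u = u"
proof -
  have "proj1 x u = comb3 (x \<cdot> (x \<cdot> u)) (x \<cdot> u) u 2 (-1) 0"
    "proj0 x u = comb3 (x \<cdot> (x \<cdot> u)) (x \<cdot> u) u 2 (-3) 1"
    "projh x u = comb3 (x \<cdot> (x \<cdot> u)) (x \<cdot> u) u (-4) 4 0"
    by (simp_all add: proj1_def proj0_def projh_def comb3_def)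
  then show ?thesis
    by simp
qed

lemma proj_eigen_decomp:
  assumes "x \<cdot> u1 = u1" "x \<cdot> u0 = 0" "x \<cdot> uh = half uh"
  shows "proj1 x (u1 + u0 + uh) = u1" "proj0 x (u1 + u0 + uh) = u0" "projh x (u1 + u0 + uh) = uh"
proof -
  have u: "u1 + u0 + uh = comb3 u1 u0 uh 1 1 1"
    by (simp add: comb3_def)
  note eigen = comb3_eigen[OF assms]
  show "proj1 x (u1 + u0 + uh) = u1" "proj0 x (u1 + u0 + uh) = u0" "projh x (u1 + u0 + uh) = uh"
    unfolding u proj1_def proj0_def projh_def by (simp_all add: eigen)
qed

lemma proj_of_eigen:
  "x \<cdot> u = u \<Longrightarrow> proj1 x u = u" "x \<cdot> u = u \<Longrightarrow> proj0 x u = 0" "x \<cdot> u = u \<Longrightarrow> projh x u = 0"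
  "x \<cdot> u = 0 \<Longrightarrow> proj1 x u = 0" "x \<cdot> u = 0 \<Longrightarrow> proj0 x u = u" "x \<cdot> u = 0 \<Longrightarrow> projh x u = 0"
  "x \<cdot> u = half u \<Longrightarrow> proj1 x u = 0" "x \<cdot> u = half u \<Longrightarrow> proj0 x u = 0"
  "x \<cdot> u = half u \<Longrightarrow> projh x u = u"
  using proj_eigen_decomp[of x u 0 0] proj_eigen_decomp[of x 0 u 0] proj_eigen_decomp[of x 0 0 u]
  by simp_all

lemma eigen_decomp_unique:
  assumes "x \<cdot> u1 = u1" "x \<cdot> u0 = 0" "x \<cdot> uh = half uh"
    and "x \<cdot> v1 = v1" "x \<cdot> v0 = 0" "x \<cdot> vh = half vh"
    and "u1 + u0 + uh = v1 + v0 + vh"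
  shows "u1 = v1" "u0 = v0" "uh = vh"
  using proj_eigen_decomp[OF assms(1-3)] proj_eigen_decomp[OF assms(4-6)] assms(7) by metis+

lemma proj1_eigen: "x \<cdot> proj1 x u - proj1 x u = x \<cdot> proj0 x u"
proof -
  define Y1 Y2 Y3 where "Y1 = x \<cdot> u" and "Y2 = x \<cdot> Y1" and "Y3 = x \<cdot> Y2"
  have "x \<cdot> proj1 x u = comb3 Y3 Y2 Y1 2 (-1) 0" "proj1 x u = comb3 Y3 Y2 Y1 0 2 (-1)"
    "x \<cdot> proj0 x u = comb3 Y3 Y2 Y1 2 (-3) 1"
    by (simp_all add: Y1_def Y2_def Y3_def proj1_def proj0_def comb3_def mult_linear)
  then show ?thesis
    by simp
qed

lemma projh_eigen: "x \<cdot> projh x u - half (projh x u) = - 2 *s (x \<cdot> proj0 x u)"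
proof -
  define Y1 Y2 Y3 where "Y1 = x \<cdot> u" and "Y2 = x \<cdot> Y1" and "Y3 = x \<cdot> Y2"
  have "x \<cdot> projh x u = comb3 Y3 Y2 Y1 (-4) 4 0" "projh x u = comb3 Y3 Y2 Y1 0 (-4) 4"
    "x \<cdot> proj0 x u = comb3 Y3 Y2 Y1 2 (-3) 1"
    by (simp_all add: Y1_def Y2_def Y3_def projh_def proj0_def comb3_def mult_linear)
  then show ?thesis
    by simp
qed

lemma polynomial_map_proj [intro]:
  assumes "polynomial_map scale E" "polynomial_map scale F"
  shows "polynomial_map scale (\<lambda>t. proj1 (E t) (F t))" "polynomial_map scale (\<lambda>t. proj0 (E t) (F t))"
    "polynomial_map scale (\<lambda>t. projh (E t) (F t))"
  unfolding proj1_def proj0_def projh_def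
  by (intro polynomial_map_add polynomial_map_diff polynomial_map_scale polynomial_map_mult assms)+

lemma prim_axis_half_iff: "axis x \<longleftrightarrow> x \<noteq> 0 \<and> x \<cdot> x = x
  \<and> (\<forall>u. \<exists>u1 u0 uh. x \<cdot> u1 = u1 \<and> x \<cdot> u0 = 0 \<and> x \<cdot> uh = half uh \<and> u = u1 + u0 + uh)
  \<and> (\<forall>u. x \<cdot> u = u \<longrightarrow> (\<exists>c. u = c *s x))
  \<and> (\<forall>u. x \<cdot> u = u \<longrightarrow> (\<forall>v. x \<cdot> v = v \<longrightarrow> x \<cdot> (u \<cdot> v) = u \<cdot> v))
  \<and> (\<forall>u. x \<cdot> u = u \<longrightarrow> (\<forall>v. x \<cdot> v = 0 \<longrightarrow> u \<cdot> v = 0))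
  \<and> (\<forall>u. x \<cdot> u = 0 \<longrightarrow> (\<forall>v. x \<cdot> v = 0 \<longrightarrow> x \<cdot> (u \<cdot> v) = 0))
  \<and> (\<forall>u. x \<cdot> u = u \<longrightarrow> (\<forall>v. x \<cdot> v = half v \<longrightarrow> x \<cdot> (u \<cdot> v) = half (u \<cdot> v)))
  \<and> (\<forall>u. x \<cdot> u = 0 \<longrightarrow> (\<forall>v. x \<cdot> v = half v \<longrightarrow> x \<cdot> (u \<cdot> v) = half (u \<cdot> v)))
  \<and> (\<forall>u. x \<cdot> u = half u \<longrightarrow> (\<forall>v. x \<cdot> v = half v \<longrightarrow>
       (\<exists>w1 w0. x \<cdot> w1 = w1 \<and> x \<cdot> w0 = 0 \<and> u \<cdot> v = w1 + w0)))"
proof -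
  have eigen1_span: "{u. x \<cdot> u = u} = {c *s x |c. True} \<longleftrightarrow> (\<forall>u. x \<cdot> u = u \<longrightarrow> (\<exists>c. u = c *s x))"
    if "x \<cdot> x = x"
    using that by (auto simp: mult_scale_right)
  show ?thesis
    unfolding prim_axis_half_def Let_def eigsp_def Ball_def mem_Collect_eq scale_one scale_zero_left
    by (intro conj_cong refl) (erule eigen1_span)
qed

lemma axis_nonzero: "axis x \<Longrightarrow> x \<noteq> 0"
  and axis_idem: "axis x \<Longrightarrow> x \<cdot> x = x"
  and axis_decomp: "axis x \<Longrightarrow> \<exists>u1 u0 uh. x \<cdot> u1 = u1 \<and> x \<cdot> u0 = 0 \<and> x \<cdot> uh = half uh \<and> u = u1 + u0 + uh"
  and axis_eigen1: "axis x \<Longrightarrow> x \<cdot> u = u \<Longrightarrow> \<exists>c. u = c *s x"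
  and axis_fusion_11: "axis x \<Longrightarrow> x \<cdot> u = u \<Longrightarrow> x \<cdot> v = v \<Longrightarrow> x \<cdot> (u \<cdot> v) = u \<cdot> v"
  and axis_fusion_10: "axis x \<Longrightarrow> x \<cdot> u = u \<Longrightarrow> x \<cdot> v = 0 \<Longrightarrow> u \<cdot> v = 0"
  and axis_fusion_00: "axis x \<Longrightarrow> x \<cdot> u = 0 \<Longrightarrow> x \<cdot> v = 0 \<Longrightarrow> x \<cdot> (u \<cdot> v) = 0"
  and axis_fusion_1h: "axis x \<Longrightarrow> x \<cdot> u = u \<Longrightarrow> x \<cdot> v = half v \<Longrightarrow> x \<cdot> (u \<cdot> v) = half (u \<cdot> v)"
  and axis_fusion_0h: "axis x \<Longrightarrow> x \<cdot> u = 0 \<Longrightarrow> x \<cdot> v = half v \<Longrightarrow> x \<cdot> (u \<cdot> v) = half (u \<cdot> v)"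
  and axis_fusion_hh: "axis x \<Longrightarrow> x \<cdot> u = half u \<Longrightarrow> x \<cdot> v = half v
    \<Longrightarrow> \<exists>w1 w0. x \<cdot> w1 = w1 \<and> x \<cdot> w0 = 0 \<and> u \<cdot> v = w1 + w0"
  unfolding prim_axis_half_iff by blast+

lemma axisI:
  assumes "x \<noteq> 0" "x \<cdot> x = x"
    and "\<And>u. \<exists>u1 u0 uh. x \<cdot> u1 = u1 \<and> x \<cdot> u0 = 0 \<and> x \<cdot> uh = half uh \<and> u = u1 + u0 + uh"
    and "\<And>u. x \<cdot> u = u \<Longrightarrow> \<exists>c. u = c *s x"
    and "\<And>u v. x \<cdot> u = u \<Longrightarrow> x \<cdot> v = v \<Longrightarrow> x \<cdot> (u \<cdot> v) = u \<cdot> v"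
    and "\<And>u v. x \<cdot> u = u \<Longrightarrow> x \<cdot> v = 0 \<Longrightarrow> u \<cdot> v = 0"
    and "\<And>u v. x \<cdot> u = 0 \<Longrightarrow> x \<cdot> v = 0 \<Longrightarrow> x \<cdot> (u \<cdot> v) = 0"
    and "\<And>u v. x \<cdot> u = u \<Longrightarrow> x \<cdot> v = half v \<Longrightarrow> x \<cdot> (u \<cdot> v) = half (u \<cdot> v)"
    and "\<And>u v. x \<cdot> u = 0 \<Longrightarrow> x \<cdot> v = half v \<Longrightarrow> x \<cdot> (u \<cdot> v) = half (u \<cdot> v)"
    and "\<And>u v. x \<cdot> u = half u \<Longrightarrow> x \<cdot> v = half v \<Longrightarrow> \<exists>w1 w0. x \<cdot> w1 = w1 \<and> x \<cdot> w0 = 0 \<and> u \<cdot> v = w1 + w0"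
  shows "axis x"
  unfolding prim_axis_half_iff
  by (intro conjI allI impI; (rule assms; assumption)?; rule assms)

lemma axis_proj:
  assumes "axis x"
  shows "x \<cdot> proj1 x u = proj1 x u" "x \<cdot> proj0 x u = 0" "x \<cdot> projh x u = half (projh x u)"
proof -
  obtain u1 u0 uh where d: "x \<cdot> u1 = u1" "x \<cdot> u0 = 0" "x \<cdot> uh = half uh" "u = u1 + u0 + uh"
    using axis_decomp[OF assms] by blast
  show "x \<cdot> proj1 x u = proj1 x u" "x \<cdot> proj0 x u = 0" "x \<cdot> projh x u = half (projh x u)"
    using proj_eigen_decomp[OF d(1-3)] d by simp_all
qed

lemma axis_peirce_nonzero:
  assumes "axis x" "x \<cdot> u0 = 0" "x \<cdot> uh = half uh"
  shows "x + u0 + uh \<noteq> 0"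
proof
  assume "x + u0 + uh = 0"
  then have "x = 0"
    using proj_eigen_decomp(1)[OF axis_idem[OF assms(1)] assms(2,3)] by (simp add: proj1_def)
  then show False
    using axis_nonzero[OF assms(1)] by simp
qed

text \<open>The Miyamoto involution: \<open>1 - 8\<lambda> + 8\<lambda>\<^sup>2\<close> takes the value 1 at \<open>\<lambda> = 0, 1\<close>
  and -1 at \<open>\<lambda> = 1/2\<close>.\<close>

definition miyamoto :: "'v \<Rightarrow> 'v \<Rightarrow> 'v" where
  "miyamoto x u = u - 8 *s (x \<cdot> u) + 8 *s (x \<cdot> (x \<cdot> u))"

lemma miyamoto_add: "miyamoto x (u + v) = miyamoto x u + miyamoto x v"
  by (simp add: miyamoto_def mult_linear scale_right_distrib algebra_simps)

lemma miyamoto_scale: "miyamoto x (c *s u) = c *s miyamoto x u"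
  by (simp add: miyamoto_def mult_linear scale_right_distrib scale_right_diff_distrib mult.commute)

lemma miyamoto_eigen_decomp:
  assumes "x \<cdot> u1 = u1" "x \<cdot> u0 = 0" "x \<cdot> uh = half uh"
  shows "miyamoto x (u1 + u0 + uh) = u1 + u0 - uh"
proof -
  have "u1 + u0 + uh = comb3 u1 u0 uh 1 1 1" "u1 + u0 - uh = comb3 u1 u0 uh 1 1 (-1)"
    by (simp_all add: comb3_def)
  then show ?thesis
    by (simp add: miyamoto_def comb3_eigen[OF assms])
qed

lemma miyamoto_involution:
  assumes "axis x"
  shows "miyamoto x (miyamoto x u) = u"
proof -
  obtain u1 u0 uh where d: "x \<cdot> u1 = u1" "x \<cdot> u0 = 0" "x \<cdot> uh = half uh" "u = u1 + u0 + uh"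
    using axis_decomp[OF assms] by blast
  have minus: "x \<cdot> (- uh) = half (- uh)"
    using d(3) by (simp add: mult_linear)
  have "miyamoto x (miyamoto x u) = miyamoto x (u1 + u0 + - uh)"
    using miyamoto_eigen_decomp[OF d(1-3)] d(4) by simp
  also have "\<dots> = u1 + u0 - - uh"
    by (rule miyamoto_eigen_decomp[OF d(1,2) minus])
  finally show ?thesis
    using d(4) by simp
qed

text \<open>The fusion rules say that \<open>A\<^sub>1 \<oplus> A\<^sub>0\<close> and \<open>A\<^sub>1\<^sub>/\<^sub>2\<close> form a \<open>\<int>/2\<close>-grading of the
  algebra; \<open>\<tau>\<^sub>x\<close> is the automorphism of this grading.\<close>

lemma miyamoto_mult:
  assumes ax: "axis x"
  shows "miyamoto x (u \<cdot> v) = miyamoto x u \<cdot> miyamoto x v"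
proof -
  obtain u1 u0 uh where u: "x \<cdot> u1 = u1" "x \<cdot> u0 = 0" "x \<cdot> uh = half uh" "u = u1 + u0 + uh"
    using axis_decomp[OF ax] by blast
  obtain v1 v0 vh where v: "x \<cdot> v1 = v1" "x \<cdot> v0 = 0" "x \<cdot> vh = half vh" "v = v1 + v0 + vh"
    using axis_decomp[OF ax] by blast
  obtain p1 p0 where p: "x \<cdot> p1 = p1" "x \<cdot> p0 = 0" "uh \<cdot> vh = p1 + p0"
    using axis_fusion_hh[OF ax u(3) v(3)] by blast
  define w1 w0 wh where "w1 = u1 \<cdot> v1 + p1" and "w0 = u0 \<cdot> v0 + p0"
    and "wh = u1 \<cdot> vh + uh \<cdot> v1 + u0 \<cdot> vh + uh \<cdot> v0"
  have z: "u1 \<cdot> v0 = 0" "u0 \<cdot> v1 = 0"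
    using axis_fusion_10[OF ax u(1) v(2)] axis_fusion_10[OF ax v(1) u(2)] mult_commute[of u0 v1] by simp_all
  have e1: "x \<cdot> w1 = w1"
    using axis_fusion_11[OF ax u(1) v(1)] p(1) by (simp add: w1_def mult_linear)
  have e0: "x \<cdot> w0 = 0"
    using axis_fusion_00[OF ax u(2) v(2)] p(2) by (simp add: w0_def mult_linear)
  have eh: "x \<cdot> wh = half wh"
    using axis_fusion_1h[OF ax u(1) v(3)] axis_fusion_1h[OF ax v(1) u(3)]
      axis_fusion_0h[OF ax u(2) v(3)] axis_fusion_0h[OF ax v(2) u(3)]
    by (simp add: wh_def mult_linear scale_right_distrib mult_commute[of uh])
  have "u \<cdot> v = w1 + w0 + wh"
    unfolding u(4) v(4) w1_def w0_def wh_def by (simp add: mult_linear z p(3) algebra_simps)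
  moreover have "miyamoto x u \<cdot> miyamoto x v = w1 + w0 - wh"
    unfolding u(4) v(4) miyamoto_eigen_decomp[OF u(1-3)] miyamoto_eigen_decomp[OF v(1-3)]
      w1_def w0_def wh_def
    by (simp add: mult_linear z p(3) algebra_simps)
  ultimately show ?thesis
    using miyamoto_eigen_decomp[OF e1 e0 eh] by simp
qed

lemma involution_eigen_iff:
  assumes inv: "\<And>u. s (s u) = u"
    and s_scale: "\<And>c u. s (c *s u) = c *s s u"
    and s_mult: "\<And>u v. s (u \<cdot> v) = s u \<cdot> s v"
  shows "s y \<cdot> u = l *s u \<longleftrightarrow> y \<cdot> s u = l *s s u"
proof -
  have "s y \<cdot> u = s (y \<cdot> s u)" "l *s u = s (l *s s u)"
    using s_mult[of y "s u"] s_scale inv by simp_all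
  then show ?thesis
    using inv by metis
qed

lemma axis_involution_image:
  assumes ax: "axis y"
    and inv: "\<And>u. s (s u) = u"
    and s_add: "\<And>u v. s (u + v) = s u + s v"
    and s_scale: "\<And>c u. s (c *s u) = c *s s u"
    and s_mult: "\<And>u v. s (u \<cdot> v) = s u \<cdot> s v"
  shows "axis (s y)"
proof -
  have s0: "s 0 = 0"
    using s_add[of 0 0] by simp
  have s_eq: "s u = s v \<longleftrightarrow> u = v" for u v
    using inv by metis
  note eigen = involution_eigen_iff[of s y, OF inv s_scale s_mult]
  have e1: "s y \<cdot> u = u \<longleftrightarrow> y \<cdot> s u = s u" for u
    using eigen[of u 1] by simp
  have e0: "s y \<cdot> u = 0 \<longleftrightarrow> y \<cdot> s u = 0" for u
    using eigen[of u 0] by simp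
  have eh: "s y \<cdot> u = half u \<longleftrightarrow> y \<cdot> s u = half (s u)" for u
    using eigen[of u "1/2"] by simp
  have s_mult': "s (u \<cdot> v) = w \<longleftrightarrow> u \<cdot> v = s w" for u v w
    using inv by metis
  show ?thesis
  proof (rule axisI)
    show "s y \<noteq> 0"
      using axis_nonzero[OF ax] s0 s_eq by metis
    show "s y \<cdot> s y = s y"
      using axis_idem[OF ax] s_mult by metis
  next
    fix u
    obtain w1 w0 wh where w: "y \<cdot> w1 = w1" "y \<cdot> w0 = 0" "y \<cdot> wh = half wh" "s u = w1 + w0 + wh"
      using axis_decomp[OF ax] by blast
    have "u = s w1 + s w0 + s wh"
      using w(4) s_add inv by metis
    moreover have "s y \<cdot> s w1 = s w1" "s y \<cdot> s w0 = 0" "s y \<cdot> s wh = half (s wh)"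
      using w(1-3) e1 e0 eh inv by simp_all
    ultimately show "\<exists>u1 u0 uh. s y \<cdot> u1 = u1 \<and> s y \<cdot> u0 = 0 \<and> s y \<cdot> uh = half uh \<and> u = u1 + u0 + uh"
      by blast
  next
    fix u
    assume "s y \<cdot> u = u"
    then obtain c where "s u = c *s y"
      using axis_eigen1[OF ax] e1 by blast
    then have "u = c *s s y"
      using inv s_scale by metis
    then show "\<exists>c. u = c *s s y" by blast
  next
    fix u v
    assume "s y \<cdot> u = u" "s y \<cdot> v = v"
    then show "s y \<cdot> (u \<cdot> v) = u \<cdot> v"
      using axis_fusion_11[OF ax] e1 s_mult by simp
  next
    fix u v
    assume "s y \<cdot> u = u" "s y \<cdot> v = 0"
    then have "s (u \<cdot> v) = 0"
      using axis_fusion_10[OF ax] e1 e0 s_mult by simp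
    then show "u \<cdot> v = 0"
      using s_mult' s0 by simp
  next
    fix u v
    assume "s y \<cdot> u = 0" "s y \<cdot> v = 0"
    then show "s y \<cdot> (u \<cdot> v) = 0"
      using axis_fusion_00[OF ax] e0 s_mult by simp
  next
    fix u v
    assume "s y \<cdot> u = u" "s y \<cdot> v = half v"
    then show "s y \<cdot> (u \<cdot> v) = half (u \<cdot> v)"
      using axis_fusion_1h[OF ax] e1 eh s_mult by simp
  next
    fix u v
    assume "s y \<cdot> u = 0" "s y \<cdot> v = half v"
    then show "s y \<cdot> (u \<cdot> v) = half (u \<cdot> v)"
      using axis_fusion_0h[OF ax] e0 eh s_mult by simp
  next
    fix u v
    assume "s y \<cdot> u = half u" "s y \<cdot> v = half v"
    then obtain p1 p0 where p: "y \<cdot> p1 = p1" "y \<cdot> p0 = 0" "s u \<cdot> s v = p1 + p0"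
      using axis_fusion_hh[OF ax] eh by blast
    have "u \<cdot> v = s p1 + s p0"
      using p(3) s_mult s_add inv by metis
    moreover have "s y \<cdot> s p1 = s p1" "s y \<cdot> s p0 = 0"
      using p(1,2) e1 e0 inv by simp_all
    ultimately show "\<exists>w1 w0. s y \<cdot> w1 = w1 \<and> s y \<cdot> w0 = 0 \<and> u \<cdot> v = w1 + w0"
      by blast
  qed
qed

lemma axis_miyamoto: "axis x \<Longrightarrow> axis y \<Longrightarrow> axis (miyamoto x y)"
  by (rule axis_involution_image) (simp_all add: miyamoto_involution miyamoto_add miyamoto_scale miyamoto_mult)

lemma eigen_scale:
  "x \<cdot> u = u \<Longrightarrow> x \<cdot> (c *s u) = c *s u"
  "x \<cdot> u = 0 \<Longrightarrow> x \<cdot> (c *s u) = 0"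
  "x \<cdot> u = half u \<Longrightarrow> x \<cdot> (c *s u) = half (c *s u)"
  by (simp_all add: mult_scale_right mult.commute)

lemma peirce_coeffs_eq:
  assumes e: "x \<cdot> u1 = u1" "x \<cdot> u0 = 0" "x \<cdot> uh = half uh"
    and eq: "comb3 u1 u0 uh p q r = comb3 u1 u0 uh p' q' r'"
  shows "p *s u1 = p' *s u1" "q *s u0 = q' *s u0" "r *s uh = r' *s uh"
  using eigen_decomp_unique[OF eigen_scale(1)[OF e(1)] eigen_scale(2)[OF e(2)] eigen_scale(3)[OF e(3)]
      eigen_scale(1)[OF e(1)] eigen_scale(2)[OF e(2)] eigen_scale(3)[OF e(3)]] eq
  unfolding comb3_def by blast+

end

locale frob_alg = comm_alg +
  fixes f
  assumes frobenius: "frobenius_form scale m f"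
begin

lemma form_add_left: "f (u + v) w = f u w + f v w"
  and form_scale_left: "f (c *s u) w = c * f u w"
  and form_add_right: "f u (v + w) = f u v + f u w"
  and form_scale_right: "f u (c *s w) = c * f u w"
  and form_assoc: "f (u \<cdot> v) w = f u (v \<cdot> w)"
  and form_axis: "axis x \<Longrightarrow> f x x = 1"
  using frobenius unfolding frobenius_form_def by blast+

lemma form_commute_idem:
  assumes "y \<cdot> y = y"
  shows "f x y = f y x"
proof -
  have "f x y = f (x \<cdot> y) y"
    using form_assoc[of x y y] assms by simp
  also have "\<dots> = f y (y \<cdot> x)"
    using form_assoc[of y x y] mult_commute[of x y] by simp
  also have "\<dots> = f y x"
    using form_assoc[of y y x] assms by simp
  finally show ?thesis .
qed

lemma form_eigen0: "x \<cdot> x = x \<Longrightarrow> x \<cdot> w = 0 \<Longrightarrow> f x w = 0"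
  using form_assoc[of x x w] form_scale_right[of x 0 0] by simp

lemma form_eigenh:
  assumes "x \<cdot> x = x" "x \<cdot> w = half w"
  shows "f x w = 0"
proof -
  have "f x w = f x (half w)"
    using form_assoc[of x x w] assms by simp
  then show ?thesis
    by (simp add: form_scale_right)
qed

lemma axis_proj1:
  assumes ax: "axis x"
  shows "proj1 x u = f x u *s x"
proof -
  obtain c where c: "proj1 x u = c *s x"
    using axis_eigen1[OF ax axis_proj(1)[OF ax]] by blast
  have "f x u = f x (proj1 x u) + f x (proj0 x u) + f x (projh x u)"
    using proj_sum[of x u] form_add_right by metis
  also have "\<dots> = c"
    using c form_scale_right form_axis[OF ax] axis_proj[OF ax]
      form_eigen0[OF axis_idem[OF ax]] form_eigenh[OF axis_idem[OF ax]] by simp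
  finally show ?thesis
    using c by simp
qed

lemma axis_mult_mult:
  assumes ax: "axis x"
  shows "x \<cdot> (x \<cdot> y) = half (x \<cdot> y) + (f x y / 2) *s x"
proof -
  define p y0 yh where "p = f x y" and "y0 = proj0 x y" and "yh = projh x y"
  have e: "x \<cdot> x = x" "x \<cdot> y0 = 0" "x \<cdot> yh = half yh"
    using axis_idem[OF ax] axis_proj[OF ax] by (auto simp: y0_def yh_def)
  have "y = comb3 x y0 yh p 1 1"
    using proj_sum[of x y] axis_proj1[OF ax, of y] by (simp add: comb3_def y0_def yh_def p_def)
  then have xy: "x \<cdot> y = comb3 x y0 yh p 0 (1/2)"
    by (simp add: comb3_eigen[OF e])
  then have "x \<cdot> (x \<cdot> y) = comb3 x y0 yh p 0 (1/4)"
    by (simp add: comb3_eigen[OF e])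
  moreover have "(p / 2) *s x = comb3 x y0 yh (p/2) 0 0"
    by (simp add: comb3_def)
  ultimately show ?thesis
    unfolding xy p_def[symmetric] by simp
qed

text \<open>Each identity below is polynomial in \<open>c\<close>, so they transfer along polynomial curves.\<close>

definition axis_identities where
  "axis_identities c \<longleftrightarrow> (\<forall>u v.
      c \<cdot> proj0 c u = 0
    \<and> proj1 c u - f c u *s c = 0
    \<and> proj1 c u \<cdot> proj0 c v = 0
    \<and> c \<cdot> (proj0 c u \<cdot> proj0 c v) = 0
    \<and> 2 *s (c \<cdot> (proj0 c u \<cdot> projh c v)) - proj0 c u \<cdot> projh c v = 0
    \<and> projh c (projh c u \<cdot> projh c v) = 0)"

lemma axis_imp_identities:
  assumes ax: "axis x"
  shows "axis_identities x"
  unfolding axis_identities_def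
proof (intro allI conjI)
  fix u v
  note e = axis_proj[OF ax]
  show "x \<cdot> proj0 x u = 0"
    by (rule e(2))
  show "proj1 x u - f x u *s x = 0"
    by (simp add: axis_proj1[OF ax])
  show "proj1 x u \<cdot> proj0 x v = 0"
    by (rule axis_fusion_10[OF ax e(1) e(2)])
  show "x \<cdot> (proj0 x u \<cdot> proj0 x v) = 0"
    by (rule axis_fusion_00[OF ax e(2) e(2)])
  show "2 *s (x \<cdot> (proj0 x u \<cdot> projh x v)) - proj0 x u \<cdot> projh x v = 0"
    by (simp add: axis_fusion_0h[OF ax e(2) e(3)])
  obtain w1 w0 where w: "x \<cdot> w1 = w1" "x \<cdot> w0 = 0" "projh x u \<cdot> projh x v = w1 + w0"
    using axis_fusion_hh[OF ax e(3) e(3)] by blast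
  show "projh x (projh x u \<cdot> projh x v) = 0"
    using proj_eigen_decomp(3)[OF w(1,2), of 0] w(3) by simp
qed

lemma identities_imp_axis:
  assumes c0: "c \<noteq> 0" and cc: "c \<cdot> c = c" and ids: "axis_identities c"
  shows "axis c"
proof -
  have i0: "c \<cdot> proj0 c u = 0"
    and i1: "proj1 c u = f c u *s c"
    and i10: "proj1 c u \<cdot> proj0 c v = 0"
    and i00: "c \<cdot> (proj0 c u \<cdot> proj0 c v) = 0"
    and i0h: "2 *s (c \<cdot> (proj0 c u \<cdot> projh c v)) = proj0 c u \<cdot> projh c v"
    and ihh: "projh c (projh c u \<cdot> projh c v) = 0" for u v
    using ids unfolding axis_identities_def right_minus_eq by blast+
  have e1: "c \<cdot> proj1 c u = proj1 c u" for u
    using proj1_eigen[of c u] i0 by simp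
  have eh: "c \<cdot> projh c u = half (projh c u)" for u
    using projh_eigen[of c u] i0 by simp
  have span: "\<exists>d. u = d *s c" if "c \<cdot> u = u" for u
    using proj_of_eigen(1)[OF that] i1 by metis
  show ?thesis
  proof (rule axisI[OF c0 cc])
    fix u
    show "\<exists>u1 u0 uh. c \<cdot> u1 = u1 \<and> c \<cdot> u0 = 0 \<and> c \<cdot> uh = half uh \<and> u = u1 + u0 + uh"
      using e1 i0 eh proj_sum by metis
  next
    fix u
    assume "c \<cdot> u = u"
    then show "\<exists>d. u = d *s c" by (rule span)
  next
    fix u v
    assume "c \<cdot> u = u" "c \<cdot> v = v"
    then obtain d1 d2 where "u = d1 *s c" "v = d2 *s c"
      using span by blast
    then show "c \<cdot> (u \<cdot> v) = u \<cdot> v"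
      using cc by (simp add: mult_linear)
  next
    fix u v
    assume "c \<cdot> u = u" "c \<cdot> v = 0"
    then show "u \<cdot> v = 0"
      using i10[of u v] proj_of_eigen(1,5) by simp
  next
    fix u v
    assume "c \<cdot> u = 0" "c \<cdot> v = 0"
    then show "c \<cdot> (u \<cdot> v) = 0"
      using i00[of u v] proj_of_eigen(5) by simp
  next
    fix u v
    assume "c \<cdot> u = u" "c \<cdot> v = half v"
    moreover obtain d where "u = d *s c"
      using span calculation(1) by blast
    ultimately show "c \<cdot> (u \<cdot> v) = half (u \<cdot> v)"
      by (simp add: mult_linear)
  next
    fix u v
    assume "c \<cdot> u = 0" "c \<cdot> v = half v"
    then have "2 *s (c \<cdot> (u \<cdot> v)) = u \<cdot> v"
      using i0h[of u v] proj_of_eigen(5,9) by simp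
    then have "(1/2 :: 'a) *s (2 *s (c \<cdot> (u \<cdot> v))) = half (u \<cdot> v)"
      by simp
    then show "c \<cdot> (u \<cdot> v) = half (u \<cdot> v)"
      by simp
  next
    fix u v
    assume "c \<cdot> u = half u" "c \<cdot> v = half v"
    then have "projh c (u \<cdot> v) = 0"
      using ihh[of u v] proj_of_eigen(9) by simp
    then show "\<exists>w1 w0. c \<cdot> w1 = w1 \<and> c \<cdot> w0 = 0 \<and> u \<cdot> v = w1 + w0"
      using proj_sum[of c "u \<cdot> v"] e1 i0 by (metis add.right_neutral)
  qed
qed

lemma polynomial_map_form [intro]:
  "polynomial_map scale E \<Longrightarrow> polynomial_map scale F \<Longrightarrow> polynomial_map scale (\<lambda>t. f (E t) u *s F t)"
  by (rule polynomial_map_bilinear)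
    (simp_all add: form_add_left form_scale_left scale_left_distrib scale_right_distrib)

lemma axis_identities_polynomial:
  assumes c: "polynomial_map scale c" and inf: "infinite {t. axis (c t)}"
  shows "axis_identities (c s)"
proof -
  have vanish: "D s = 0" if "polynomial_map scale D" "\<And>t. axis (c t) \<Longrightarrow> D t = 0" for D
  proof (rule polynomial_map_eq_0[OF that(1)])
    have "{t. axis (c t)} \<subseteq> {t. D t = 0}"
      using that(2) by blast
    then show "infinite {t. D t = 0}"
      using inf infinite_super by blast
  qed
  note closure = polynomial_map_add polynomial_map_diff polynomial_map_scale polynomial_map_mult
    polynomial_map_proj polynomial_map_form polynomial_map_const c
  note ids = axis_imp_identities[unfolded axis_identities_def, rule_format]
  show ?thesis
    unfolding axis_identities_def
    by (intro allI conjI; rule vanish; (intro closure)?; (simp add: ids))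
qed

lemma axis_polynomial_orbit:
  assumes c: "polynomial_map scale c" and idem: "\<And>t. c t \<cdot> c t = c t" and nonzero: "\<And>t. c t \<noteq> 0"
    and start: "axis (c 0)"
    and step: "\<And>t. c (t + 4) = g (c t)" and g: "\<And>y. axis y \<Longrightarrow> axis (g y)"
  shows "axis (c s)"
proof -
  have axis_k: "axis (c (4 * of_nat k))" for k
  proof (induction k)
    case 0
    then show ?case using start by simp
  next
    case (Suc k)
    have "c (4 * of_nat (Suc k)) = g (c (4 * of_nat k))"
      using step[of "4 * of_nat k"] by (simp add: algebra_simps)
    then show ?case
      using g Suc by simp
  qed
  have "inj (\<lambda>k::nat. 4 * of_nat k :: 'a)"
    by (auto simp: inj_def)
  then have "infinite (range (\<lambda>k::nat. 4 * of_nat k :: 'a))"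
    using finite_imageD infinite_UNIV_nat by blast
  moreover have "range (\<lambda>k::nat. 4 * of_nat k :: 'a) \<subseteq> {t. axis (c t)}"
    using axis_k by blast
  ultimately have "infinite {t. axis (c t)}"
    using infinite_super by blast
  then show ?thesis
    using identities_imp_axis[OF nonzero idem] axis_identities_polynomial[OF c] by blast
qed

text \<open>Since \<open>\<tau>\<^sub>x\<close> is an automorphism, \<open>\<tau>\<^sub>x(y) = 4(x,y) x + y - 4 xy\<close> is
  idempotent; this determines \<open>(xy)(xy)\<close>.\<close>

lemma axis_product_square:
  assumes x: "axis x" and y: "axis y"
  shows "(x \<cdot> y) \<cdot> (x \<cdot> y) = comb3 x y (x \<cdot> y) (f x y / 4) (f x y / 4) (f x y / 2)"
proof -
  define p n X where "p = f x y" and "n = x \<cdot> y" and "X = n \<cdot> n"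
  have xn: "x \<cdot> n = comb3 x y n (p/2) 0 (1/2)"
    using axis_mult_mult[OF x, of y] by (simp add: comb3_def n_def p_def add.commute)
  have yn: "y \<cdot> n = comb3 x y n 0 (p/2) (1/2)"
    using axis_mult_mult[OF y, of x] form_commute_idem[OF axis_idem[OF y], of x] mult_commute[of y x]
    by (simp add: comb3_def n_def p_def add.commute)
  have T: "x \<cdot> x = comb4 x y n X 1 0 0 0" "x \<cdot> y = comb4 x y n X 0 0 1 0"
    "x \<cdot> n = comb4 x y n X (p/2) 0 (1/2) 0" "y \<cdot> x = comb4 x y n X 0 0 1 0"
    "y \<cdot> y = comb4 x y n X 0 1 0 0" "y \<cdot> n = comb4 x y n X 0 (p/2) (1/2) 0"
    "n \<cdot> x = comb4 x y n X (p/2) 0 (1/2) 0" "n \<cdot> y = comb4 x y n X 0 (p/2) (1/2) 0"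
    "n \<cdot> n = comb4 x y n X 0 0 0 1"
    using axis_idem[OF x] axis_idem[OF y] xn yn mult_commute[of n x] mult_commute[of n y] mult_commute[of y x]
    by (simp_all add: comb4_def comb3_def n_def X_def)
  have "miyamoto x y = comb3 x y n 0 1 0 - 8 *s comb3 x y n 0 0 1 + 8 *s comb3 x y n (p/2) 0 (1/2)"
    using xn by (simp add: miyamoto_def comb3_def n_def)
  also have "\<dots> = comb3 x y n (4*p) 1 (-4)"
    by (simp only: comb3_scale comb3_diff comb3_add) (rule comb3_eqI; simp)
  finally have tau: "miyamoto x y = comb3 x y n (4*p) 1 (-4)" .
  have "comb4 x y n X 0 (1 - 4*p) (-4 - 8*p) 16 = miyamoto x y \<cdot> miyamoto x y"
    unfolding tau
    by (simp only: comb3_mult_left comb3_mult_right T comb3_comb4) (rule comb4_eqI; simp add: field_simps)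
  also have "\<dots> = comb4 x y n X (4*p) 1 (-4) 0"
    using miyamoto_mult[OF x, of y y] axis_idem[OF y] tau by (simp add: comb4_def comb3_def)
  finally have "X = comb3 x y n (p/4) (p/4) (p/2)"
    by (rule comb4_solve[THEN trans]) (simp, (rule comb3_eqI; simp add: field_simps))
  then show ?thesis
    unfolding X_def n_def p_def .
qed

end

locale two_axes = frob_alg +
  fixes a b
  assumes axis_a: "prim_axis_half scale m a" and axis_b: "prim_axis_half scale m b"
begin

abbreviation n where "n \<equiv> a \<cdot> b"

abbreviation \<phi> where "\<phi> \<equiv> f a b"

lemma two_axes_swap: "two_axes scale m f b a"
  by (intro two_axes.intro frob_alg_axioms two_axes_axioms.intro axis_a axis_b)

lemma mult_comb3: "comb3 a b n x1 y1 z1 \<cdot> comb3 a b n x2 y2 z2 = comb3 a b n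
   (x1*x2 + (x1*z2 + z1*x2)*\<phi>/2 + z1*z2*\<phi>/4)
   (y1*y2 + (y1*z2 + z1*y2)*\<phi>/2 + z1*z2*\<phi>/4)
   (x1*y2 + y1*x2 + (x1*z2 + z1*x2)/2 + (y1*z2 + z1*y2)/2 + z1*z2*\<phi>/2)"
proof -
  define p nn where "p = \<phi>" and "nn = a \<cdot> b"
  have an: "a \<cdot> nn = comb3 a b nn (p/2) 0 (1/2)"
    using axis_mult_mult[OF axis_a, of b] by (simp add: comb3_def add.commute nn_def p_def)
  have bn: "b \<cdot> nn = comb3 a b nn 0 (p/2) (1/2)"
    using axis_mult_mult[OF axis_b, of a] form_commute_idem[OF axis_idem[OF axis_b], of a]
      mult_commute[of b a] by (simp add: comb3_def add.commute nn_def p_def)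
  have T: "a \<cdot> a = comb3 a b nn 1 0 0" "a \<cdot> b = comb3 a b nn 0 0 1" "a \<cdot> nn = comb3 a b nn (p/2) 0 (1/2)"
    "b \<cdot> a = comb3 a b nn 0 0 1" "b \<cdot> b = comb3 a b nn 0 1 0" "b \<cdot> nn = comb3 a b nn 0 (p/2) (1/2)"
    "nn \<cdot> a = comb3 a b nn (p/2) 0 (1/2)" "nn \<cdot> b = comb3 a b nn 0 (p/2) (1/2)"
    "nn \<cdot> nn = comb3 a b nn (p/4) (p/4) (p/2)"
    using axis_idem[OF axis_a] axis_idem[OF axis_b] an bn mult_commute[of nn a] mult_commute[of nn b]
      mult_commute[of b a] axis_product_square[OF axis_a axis_b]
    by (simp_all add: comb3_def nn_def p_def)
  show ?thesis
    unfolding nn_def[symmetric] p_def[symmetric]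
    by (simp only: comb3_mult_left comb3_mult_right T comb3_comb3) (rule comb3_eqI; simp add: field_simps)
qed

lemma gen_subalg_span:
  assumes "u \<in> gen_subalg scale m {a, b}"
  shows "\<exists>x y z. u = comb3 a b n x y z"
proof -
  define S where "S = {comb3 a b n x y z | x y z. True}"
  have "subspace S"
    unfolding subspace_def S_def
  proof (intro conjI ballI allI)
    show "0 \<in> {comb3 a b n x y z | x y z. True}"
      by (rule CollectI, intro exI[of _ 0]) (simp add: comb3_def)
  next
    fix u v
    assume "u \<in> {comb3 a b n x y z | x y z. True}" "v \<in> {comb3 a b n x y z | x y z. True}"
    then show "u + v \<in> {comb3 a b n x y z | x y z. True}"
      by auto (metis comb3_add)
  next
    fix c u
    assume "u \<in> {comb3 a b n x y z | x y z. True}"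
    then show "c *s u \<in> {comb3 a b n x y z | x y z. True}"
      by auto (metis comb3_scale)
  qed
  moreover have "\<forall>u\<in>S. \<forall>v\<in>S. u \<cdot> v \<in> S"
    unfolding S_def by (auto simp only: mult_comb3) blast
  moreover have "a = comb3 a b n 1 0 0" "b = comb3 a b n 0 1 0"
    by simp_all
  then have "{a, b} \<subseteq> S"
    unfolding S_def by blast
  ultimately have "gen_subalg scale m {a, b} \<subseteq> S"
    unfolding gen_subalg_def by (intro Inter_lower) blast
  then show ?thesis
    using assms unfolding S_def by auto
qed

lemma peirce_phi0:
  assumes "\<phi> = 0"
  shows "a \<cdot> comb3 a b n 0 1 (-2) = 0" "a \<cdot> n = half n" "comb3 a b n 0 1 (-2) \<noteq> 0"
proof -
  have "a \<cdot> comb3 a b n 0 1 (-2) = comb3 a b n 1 0 0 \<cdot> comb3 a b n 0 1 (-2)"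
    by simp
  also have "\<dots> = comb3 a b n 0 0 0"
    by (simp only: mult_comb3 assms) (rule comb3_eqI; simp)
  finally show "a \<cdot> comb3 a b n 0 1 (-2) = 0"
    by (simp add: comb3_def)
  show "a \<cdot> n = half n"
    using axis_mult_mult[OF axis_a, of b] assms by simp
  show "comb3 a b n 0 1 (-2) \<noteq> 0"
  proof
    assume "comb3 a b n 0 1 (-2) = 0"
    then have "b = 2 *s n"
      by (simp add: comb3_def)
    then have "b = (2 *s n) \<cdot> (2 *s n)"
      using axis_idem[OF axis_b] by metis
    also have "\<dots> = 4 *s (n \<cdot> n)"
      by (simp add: mult_linear)
    also have "\<dots> = 0"
      using axis_product_square[OF axis_a axis_b] assms by (simp add: comb3_def)
    finally show False
      using axis_nonzero[OF axis_b] by simp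
  qed
qed

lemma peirce_phi1:
  assumes "\<phi> = 1"
  shows "a \<cdot> comb3 a b n 1 1 (-2) = 0" "a \<cdot> comb3 a b n (-1) 0 1 = half (comb3 a b n (-1) 0 1)"
    "comb3 a b n 1 1 (-2) \<cdot> comb3 a b n 1 1 (-2) = 0"
proof -
  have "a \<cdot> comb3 a b n 1 1 (-2) = comb3 a b n 1 0 0 \<cdot> comb3 a b n 1 1 (-2)"
    by simp
  also have "\<dots> = comb3 a b n 0 0 0"
    by (simp only: mult_comb3 assms) (rule comb3_eqI; simp)
  finally show "a \<cdot> comb3 a b n 1 1 (-2) = 0"
    by (simp add: comb3_def)
  have "a \<cdot> comb3 a b n (-1) 0 1 = comb3 a b n 1 0 0 \<cdot> comb3 a b n (-1) 0 1"
    by simp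
  also have "\<dots> = half (comb3 a b n (-1) 0 1)"
    by (simp only: mult_comb3 assms comb3_scale) (rule comb3_eqI; simp)
  finally show "a \<cdot> comb3 a b n (-1) 0 1 = half (comb3 a b n (-1) 0 1)" .
  have "comb3 a b n 1 1 (-2) \<cdot> comb3 a b n 1 1 (-2) = comb3 a b n 0 0 0"
    by (simp only: mult_comb3 assms) (rule comb3_eqI; simp)
  then show "comb3 a b n 1 1 (-2) \<cdot> comb3 a b n 1 1 (-2) = 0"
    by (simp add: comb3_def)
qed

lemma axis_curve_phi0:
  assumes \<phi>: "\<phi> = 0"
  shows "axis (comb3 a b n 1 0 s)"
proof (rule axis_polynomial_orbit[where c = "\<lambda>t. comb3 a b n 1 0 t" and g = "\<lambda>y. miyamoto a (miyamoto b y)"])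
  have "polynomial_map scale (\<lambda>t. a + t *s n)"
    by (intro polynomial_map_add polynomial_map_const polynomial_map_scale_param)
  then show "polynomial_map scale (\<lambda>t. comb3 a b n 1 0 t)"
    by (simp add: comb3_def)
next
  fix t
  show "comb3 a b n 1 0 t \<cdot> comb3 a b n 1 0 t = comb3 a b n 1 0 t"
    by (simp only: mult_comb3 \<phi>) (rule comb3_eqI; simp add: field_simps)
  have "a + 0 + t *s n \<noteq> 0"
    by (rule axis_peirce_nonzero[OF axis_a]) (simp_all add: eigen_scale peirce_phi0[OF \<phi>])
  then show "comb3 a b n 1 0 t \<noteq> 0"
    by (simp add: comb3_def)
  have "miyamoto a (miyamoto b (comb3 a b n 1 0 t))
      = miyamoto (comb3 a b n 1 0 0) (miyamoto (comb3 a b n 0 1 0) (comb3 a b n 1 0 t))"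
    by simp
  also have "\<dots> = comb3 a b n 1 0 (t + 4)"
    by (simp only: miyamoto_def mult_comb3 comb3_scale comb3_diff comb3_add \<phi>)
      (rule comb3_eqI; simp add: field_simps)
  finally show "comb3 a b n 1 0 (t + 4) = miyamoto a (miyamoto b (comb3 a b n 1 0 t))"
    by simp
next
  show "axis (comb3 a b n 1 0 0)"
    using axis_a by simp
next
  fix y
  assume "axis y"
  then show "axis (miyamoto a (miyamoto b y))"
    using axis_miyamoto axis_a axis_b by blast
qed

lemma axis_curve_phi1:
  assumes \<phi>: "\<phi> = 1"
  shows "axis (comb3 a b n (1 - s + s * s/4) (s * s/4) (s - s * s/2))"
proof (rule axis_polynomial_orbit[where c = "\<lambda>t. comb3 a b n (1 - t + t * t/4) (t * t/4) (t - t * t/2)"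
      and g = "\<lambda>y. miyamoto b (miyamoto a y)"])
  define w h where "w = comb3 a b n 1 1 (-2)" and "h = comb3 a b n (-1) 0 1"
  have curve: "comb3 a b n (1 - t + t * t/4) (t * t/4) (t - t * t/2) = a + (t * t/4) *s w + t *s h" for t
  proof -
    have "a + (t * t/4) *s w + t *s h = comb3 a b n 1 0 0 + (t * t/4) *s w + t *s h"
      by simp
    also have "\<dots> = comb3 a b n (1 - t + t * t/4) (t * t/4) (t - t * t/2)"
      unfolding w_def h_def by (simp only: comb3_scale comb3_add) (rule comb3_eqI; simp add: field_simps)
    finally show ?thesis ..
  qed
  have "polynomial_map scale (\<lambda>t. a + (1/4) *s (t *s (t *s w)) + t *s h)"
    by (intro polynomial_map_add polynomial_map_const polynomial_map_scale polynomial_map_scale_param)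
  then show "polynomial_map scale (\<lambda>t. comb3 a b n (1 - t + t * t/4) (t * t/4) (t - t * t/2))"
    by (simp add: curve mult.commute)
  fix t
  show "comb3 a b n (1 - t + t * t/4) (t * t/4) (t - t * t/2) \<cdot> comb3 a b n (1 - t + t * t/4) (t * t/4) (t - t * t/2)
      = comb3 a b n (1 - t + t * t/4) (t * t/4) (t - t * t/2)"
    by (simp only: mult_comb3 \<phi>) (rule comb3_eqI; simp add: field_simps)
  have "a \<cdot> w = 0" "a \<cdot> h = half h"
    unfolding w_def h_def by (rule peirce_phi1[OF \<phi>])+
  then have "a + (t * t/4) *s w + t *s h \<noteq> 0"
    by (intro axis_peirce_nonzero[OF axis_a]) (simp_all add: eigen_scale)
  then show "comb3 a b n (1 - t + t * t/4) (t * t/4) (t - t * t/2) \<noteq> 0"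
    by (simp add: curve)
  have "miyamoto b (miyamoto a (comb3 a b n (1 - t + t * t/4) (t * t/4) (t - t * t/2)))
      = miyamoto (comb3 a b n 0 1 0) (miyamoto (comb3 a b n 1 0 0)
          (comb3 a b n (1 - t + t * t/4) (t * t/4) (t - t * t/2)))"
    by simp
  also have "\<dots> = comb3 a b n (1 - (t + 4) + (t + 4)*(t + 4)/4) ((t + 4)*(t + 4)/4) ((t + 4) - (t + 4)*(t + 4)/2)"
    by (simp only: miyamoto_def mult_comb3 comb3_scale comb3_diff comb3_add \<phi>)
      (rule comb3_eqI; simp add: field_simps)
  finally show "comb3 a b n (1 - (t + 4) + (t + 4)*(t + 4)/4) ((t + 4)*(t + 4)/4) ((t + 4) - (t + 4)*(t + 4)/2)
      = miyamoto b (miyamoto a (comb3 a b n (1 - t + t * t/4) (t * t/4) (t - t * t/2)))"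
    by simp
next
  show "axis (comb3 a b n (1 - 0 + 0 * 0/4) (0 * 0/4) (0 - 0 * 0/2))"
    using axis_a by simp
next
  fix y
  assume "axis y"
  then show "axis (miyamoto b (miyamoto a y))"
    using axis_miyamoto axis_a axis_b by blast
qed

lemma unit_phi0:
  assumes "\<phi> = 0"
  shows "comb3 a b n 1 1 (-2) \<cdot> comb3 a b n x y z = comb3 a b n x y z"
  by (simp only: mult_comb3 assms) (rule comb3_eqI; simp add: field_simps)

lemma idempotents_phi0:
  assumes \<phi>: "\<phi> = 0" and c: "c = comb3 a b n x y z" and idem: "c \<cdot> c = c"
  shows "c = 0 \<or> (x = 1 \<and> y = 0) \<or> (x = 0 \<and> y = 1) \<or> c = comb3 a b n 1 1 (-2)"
proof -
  define b0 z' where "b0 = comb3 a b n 0 1 (-2)" and "z' = 2 * y + z"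
  have e: "a \<cdot> a = a" "a \<cdot> b0 = 0" "a \<cdot> n = half n" and "b0 \<noteq> 0"
    using axis_idem[OF axis_a] peirce_phi0[OF \<phi>] by (simp_all add: b0_def)
  have rebase: "comb3 a b0 n p q r = comb3 a b n p q (r - 2 * q)" for p q r
  proof -
    have "comb3 a b0 n p q r = comb3 (comb3 a b n 1 0 0) (comb3 a b n 0 1 (-2)) (comb3 a b n 0 0 1) p q r"
      by (simp add: b0_def)
    also have "\<dots> = comb3 a b n p q (r - 2 * q)"
      by (simp only: comb3_comb3) (rule comb3_eqI; simp)
    finally show ?thesis .
  qed
  have c': "c = comb3 a b0 n x y z'"
    unfolding c rebase z'_def by (rule comb3_eqI; simp)
  have cc: "c \<cdot> c = comb3 a b0 n (x * x) (y * y) ((x + y) * z')"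
    unfolding c rebase z'_def by (simp only: mult_comb3 \<phi>) (rule comb3_eqI; simp add: field_simps)
  have "comb3 a b0 n (x * x) (y * y) ((x + y) * z') = comb3 a b0 n x y z'"
    using cc c' idem by metis
  note coeffs = peirce_coeffs_eq[OF e this]
  have "y = 0 \<or> y = 1"
    using coeffs(2) \<open>b0 \<noteq> 0\<close> by (intro field_idem_cases) (simp add: scale_cancel_right)
  moreover have "x = 0 \<or> x = 1"
    using coeffs(1) axis_nonzero[OF axis_a] by (intro field_idem_cases) (simp add: scale_cancel_right)
  ultimately show ?thesis
  proof (elim disjE)
    assume "y = 0" "x = 0"
    then have "z' *s n = 0"
      using coeffs(3) by simp
    then show ?thesis
      using c' \<open>x = 0\<close> \<open>y = 0\<close> by (simp add: comb3_def)
  next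
    assume "y = 1" "x = 1"
    then have "(2 * z') *s n = z' *s n"
      using coeffs(3) by simp
    then have "z' *s n = 0"
      by (metis add_cancel_right_right mult_2 scale_left_distrib)
    then have "c = comb3 a b0 n 1 1 0"
      using c' \<open>x = 1\<close> \<open>y = 1\<close> by (simp add: comb3_def)
    then show ?thesis
      by (simp add: rebase)
  qed simp_all
qed

lemma idempotents_phi1:
  assumes \<phi>: "\<phi> = 1" and c: "c = comb3 a b n x y z" and idem: "c \<cdot> c = c"
  shows "c = 0 \<or> (\<exists>s. c = comb3 a b n (1 - s + s * s/4) (s * s/4) (s - s * s/2))"
proof -
  define w h X Z where "w = comb3 a b n 1 1 (-2)" and "h = comb3 a b n (-1) 0 1"
    and "X = x + y + z" and "Z = 2 * y + z"
  have e: "a \<cdot> a = a" "a \<cdot> w = 0" "a \<cdot> h = half h"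
    using axis_idem[OF axis_a] peirce_phi1[OF \<phi>] by (simp_all add: w_def h_def)
  have rebase: "comb3 a w h p q r = comb3 a b n (p + q - r) q (r - 2 * q)" for p q r
  proof -
    have "comb3 a w h p q r = comb3 (comb3 a b n 1 0 0) (comb3 a b n 1 1 (-2)) (comb3 a b n (-1) 0 1) p q r"
      by (simp add: w_def h_def)
    also have "\<dots> = comb3 a b n (p + q - r) q (r - 2 * q)"
      by (simp only: comb3_comb3) (rule comb3_eqI; simp)
    finally show ?thesis .
  qed
  have c': "c = comb3 a w h X y Z"
    unfolding c rebase X_def Z_def by (rule comb3_eqI; simp)
  have cc: "c \<cdot> c = comb3 a w h (X * X) (Z * Z / 4) (X * Z)"
    unfolding c rebase X_def Z_def by (simp only: mult_comb3 \<phi>) (rule comb3_eqI; simp add: field_simps)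
  have "comb3 a w h (X * X) (Z * Z / 4) (X * Z) = comb3 a w h X y Z"
    using cc c' idem by metis
  note coeffs = peirce_coeffs_eq[OF e this]
  have "X = 0 \<or> X = 1"
    using coeffs(1) axis_nonzero[OF axis_a] by (intro field_idem_cases) (simp add: scale_cancel_right)
  then show ?thesis
  proof
    assume "X = 0"
    then have "c = y *s w"
      using c' coeffs(3) by (simp add: comb3_def)
    moreover have "w \<cdot> w = 0"
      unfolding w_def by (rule peirce_phi1(3)[OF \<phi>])
    ultimately have "c \<cdot> c = 0"
      by (simp add: mult_linear)
    then show ?thesis
      using idem by simp
  next
    assume "X = 1"
    then have "c = comb3 a w h 1 (Z * Z / 4) Z"
      using c' coeffs(2) unfolding comb3_def by metis
    also have "\<dots> = comb3 a b n (1 - Z + Z * Z/4) (Z * Z/4) (Z - Z * Z/2)"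
      unfolding rebase by (rule comb3_eqI; simp add: field_simps)
    finally show ?thesis
      by blast
  qed
qed

lemma solid_gen_subalg:
  assumes "\<phi> = 0 \<or> \<phi> = 1"
  shows "solid scale m (gen_subalg scale m {a, b})"
  unfolding solid_def
proof (intro ballI impI, elim conjE)
  fix c
  assume "c \<in> gen_subalg scale m {a, b}" and idem: "c \<cdot> c = c" and "c \<noteq> 0"
    and not_unit: "\<not> (\<forall>u\<in>gen_subalg scale m {a, b}. c \<cdot> u = u)"
  then obtain x y z where c: "c = comb3 a b n x y z"
    using gen_subalg_span by blast
  show "axis c"
    using assms
  proof
    assume \<phi>: "\<phi> = 0"
    have "comb3 a b n 1 1 (-2) \<cdot> u = u" if "u \<in> gen_subalg scale m {a, b}" for u
      using gen_subalg_span[OF that] unit_phi0[OF \<phi>] by blast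
    then have "(x = 1 \<and> y = 0) \<or> (x = 0 \<and> y = 1)"
      using idempotents_phi0[OF \<phi> c idem] \<open>c \<noteq> 0\<close> not_unit by blast
    then show "axis c"
    proof
      assume "x = 1 \<and> y = 0"
      then show "axis c"
        using axis_curve_phi0[OF \<phi>, of z] c by simp
    next
      assume "x = 0 \<and> y = 1"
      interpret swapped: two_axes scale m f b a
        by (rule two_axes_swap)
      have "f b a = 0"
        using \<phi> form_commute_idem[OF axis_idem[OF axis_b], of a] by simp
      then have "axis (comb3 b a (b \<cdot> a) 1 0 z)"
        by (rule swapped.axis_curve_phi0)
      then show "axis c"
        using c \<open>x = 0 \<and> y = 1\<close> by (simp add: comb3_def mult_commute[of b a] add.commute)
    qed
  next
    assume \<phi>: "\<phi> = 1"
    then show "axis c"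
      using idempotents_phi1[OF \<phi> c idem] \<open>c \<noteq> 0\<close> axis_curve_phi1 by blast
  qed
qed

end

theorem theorem2:
  fixes sc :: "'a::field_char_0 \<Rightarrow> 'v::ab_group_add \<Rightarrow> 'v"
    and m :: "'v \<Rightarrow> 'v \<Rightarrow> 'v"
    and f :: "'v \<Rightarrow> 'v \<Rightarrow> 'a"
    and a b :: 'v
  assumes "jordan_type_half sc m"
    and "frobenius_form sc m f"
    and "prim_axis_half sc m a" and "prim_axis_half sc m b"
    and "f a b = 0 \<or> f a b = 1"
  shows "solid sc m (gen_subalg sc m {a, b})"
proof -
  have "comm_alg sc m"
    using assms(1) comm_algebra_imp_comm_alg unfolding jordan_type_half_def by blast
  then interpret two_axes sc m f a b
    using assms(2-4) by (intro two_axes.intro frob_alg.intro frob_alg_axioms.intro two_axes_axioms.intro)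
  show ?thesis
    using assms(5) by (rule solid_gen_subalg)
qed

end
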